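(* Let $q\ge 3$ be a prime power and $s,t$ integers with $1\le s<t\le q$ and $t-s\ge 2$. Then there exists a linear AOA$(s,t,q+1,q)$.
   Context: An orthogonal array OA$(t,k,v)$ (with $1\le t\le k$) is a $v^t\times k$ array with entries from a set $X$ of size $v$ such that, for every choice of $t$ of its columns, each $t$-tuple in $X^t$ appears exactly once as a row of the corresponding $v^t\times t$ subarray. For integers $1\le s\le t\le k$, an augmented orthogonal array AOA$(s,t,k,v)$ is a $v^t\times(k+1)$ array $A$ such that: (1) the first $k$ columns of $A$ form an OA$(t,k,v)$ on a symbol set $X$ of size $v$; (2) the last column of $A$ has entries from a set $Y$ of size $v^{t-s}$; (3) for any choice of $s$ of the first $k$ columns, these $s$ columns together with the last column contain every $(s+1)$-tuple of $X^s\times Y$ exactly once as a row. For a prime power $q$, an AOA$(s,t,k,q)$ is linear if $X=\mathbb{F}_q$, $Y=\mathbb{F}_q^{t-s}$, and its set of rows, regarded as vectors in $\mathbb{F}_q^{k}\times\mathbb{F}_q^{t-s}=\mathbb{F}_q^{k+t-s}$, is an $\mathbb{F}_q$-linear subspace. *)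

theory Defs
  imports Main "HOL-Library.FuncSet"
begin

text \<open>A linear augmented orthogonal array AOA(s,t,k,q) over the finite field 'a
  (q = CARD('a)).  Its rows are vectors in F_q^(k + (t-s)), represented as functions
  nat => 'a vanishing at indices >= k + (t-s).  Coordinates 0..k-1 are the first k
  columns (entries in X = F_q); coordinates k..k+(t-s)-1 together form the last column
  (entries in Y = F_q^(t-s)).
  Since the rows of an OA with these parameters are pairwise distinct, the array is
  given by its set of rows C, which has q^t elements.\<close>

definition last_col :: "nat \<Rightarrow> nat \<Rightarrow> nat \<Rightarrow> nat set" where
  "last_col s t k = {k..<k + (t - s)}"

definition linear_AOA :: "nat \<Rightarrow> nat \<Rightarrow> nat \<Rightarrow> (nat \<Rightarrow> 'a::{finite,field}) set \<Rightarrow> bool" where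
  "linear_AOA s t k C \<longleftrightarrow>
     1 \<le> s \<and> s \<le> t \<and> t \<le> k \<and>
     C \<subseteq> {x. \<forall>i\<ge>k + (t - s). x i = 0} \<and>
     (\<lambda>i. 0) \<in> C \<and> (\<forall>x\<in>C. \<forall>y\<in>C. (\<lambda>i. x i + y i) \<in> C) \<and> (\<forall>c. \<forall>x\<in>C. (\<lambda>i. c * x i) \<in> C) \<and>
     card C = card (UNIV :: 'a set) ^ t \<and>
     (\<forall>S. S \<subseteq> {0..<k} \<and> card S = t \<longrightarrow>
        bij_betw (\<lambda>x. restrict x S) C (S \<rightarrow>\<^sub>E UNIV)) \<and>
     (\<forall>S. S \<subseteq> {0..<k} \<and> card S = s \<longrightarrow>
        bij_betw (\<lambda>x. restrict x (S \<union> last_col s t k)) C ((S \<union> last_col s t k) \<rightarrow>\<^sub>E UNIV))"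

end

theory Submission
  imports Defs "HOL-Library.Cardinality" "HOL-Computational_Algebra.Polynomial"
begin

text \<open>The rows are indexed by the polynomials f of degree < t over F_q. The first q + 1 columns
  form the doubly extended Reed--Solomon code: the values of f at the q field elements and the
  coefficient of x^(t-1), the value "at infinity". The last column is the remainder of f modulo
  a fixed polynomial h of degree t - s without roots in F_q; such an h exists because
  x^(t-s-1) (x - 1) is not injective on F_q and therefore misses some value c.
  A nonzero f of degree < t vanishes at fewer than t of the q + 1 extended points, so any t of
  the first columns determine f. If f vanishes in s of them and in the last column, then h
  divides f, and since h has no roots the cofactor f / h, of degree < s, vanishes at the same
  s points, which is again impossible. By linearity, restricting the q^t rows to any of these
  t-element sets of coordinates is therefore injective, hence bijective.\<close>

lemma card_degree_less:
  assumes "n \<ge> 1"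
  shows "card {p :: 'a::{finite,comm_monoid_add} poly. degree p < n} = CARD('a) ^ n"
proof -
  have "bij_betw (\<lambda>p. restrict (coeff p) {0..<n}) {p :: 'a poly. degree p < n} ({0..<n} \<rightarrow>\<^sub>E UNIV)"
  proof (rule bij_betwI')
    fix p r :: "'a poly" assume "p \<in> {p. degree p < n}" "r \<in> {p. degree p < n}"
    then show "(restrict (coeff p) {0..<n} = restrict (coeff r) {0..<n}) = (p = r)"
      by (metis (lifting) atLeastLessThan_iff coeff_eq_0 le_less_trans mem_Collect_eq not_le
          poly_eqI restrict_apply' zero_le)
  next
    fix c assume c: "c \<in> ({0..<n} \<rightarrow>\<^sub>E (UNIV :: 'a set))"
    define p where "p = (\<Sum>i<n. monom (c i) i)"
    have coeff_p: "coeff p i = (if i < n then c i else 0)" for i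
      unfolding p_def by (simp add: coeff_sum coeff_monom)
    have "degree p \<le> n - 1"
      by (rule degree_le) (use assms in \<open>auto simp: coeff_p\<close>)
    moreover have "c = restrict (coeff p) {0..<n}"
      using c by (auto simp: coeff_p PiE_def extensional_def)
    ultimately show "\<exists>p\<in>{p. degree p < n}. c = restrict (coeff p) {0..<n}"
      using assms by force
  qed simp
  then have "card {p :: 'a poly. degree p < n} = card ({0..<n} \<rightarrow>\<^sub>E (UNIV :: 'a set))"
    by (rule bij_betw_same_card)
  then show ?thesis by (simp add: card_PiE)
qed

lemma ex_poly_without_roots:
  assumes "d \<ge> 2"
  shows "\<exists>h :: 'a::{finite,field} poly. degree h = d \<and> (\<forall>x. poly h x \<noteq> 0)"
proof -
  define p :: "'a poly" where "p = monom 1 (d - 1) * [:-1, 1:]"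
  have poly_p: "poly p x = x ^ (d - 1) * (x - 1)" for x
    by (simp add: p_def poly_monom algebra_simps)
  have degree_p: "degree p = d"
    using assms unfolding p_def by (subst degree_mult_eq) (auto simp: degree_monom_eq)
  have "poly p 0 = poly p 1"
    using assms by (simp add: poly_p)
  then have "\<not> inj (poly p)"
    by (metis inj_eq zero_neq_one)
  then have "\<not> surj (poly p)"
    using finite_UNIV_surj_inj finite_class.finite_UNIV by blast
  then obtain c where c: "\<And>x. poly p x \<noteq> c"
    by (metis surjI)
  have "degree (p + [:-c:]) = d"
    using degree_p assms by (subst degree_add_eq_left) auto
  moreover have "poly (p + [:-c:]) x \<noteq> 0" for x
    using c[of x] by simp
  ultimately show ?thesis by blast
qed

lemma card_le_degree_if_roots:
  fixes p :: "'a::{comm_ring_1,ring_no_zero_divisors} poly"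
  assumes "p \<noteq> 0" and "\<And>x. x \<in> A \<Longrightarrow> poly p x = 0"
  shows "card A \<le> degree p"
proof -
  have "card A \<le> card {x. poly p x = 0}"
    using assms by (intro card_mono poly_roots_finite) auto
  also have "\<dots> \<le> degree p"
    using assms(1) by (rule card_poly_roots_bound)
  finally show ?thesis .
qed

lemma bij_betw_image_if_inj_on_card:
  assumes "finite B" and "inj_on (g \<circ> r) P" and "(g \<circ> r) ` P \<subseteq> B" and "card P = card B"
  shows "bij_betw g (r ` P) B"
proof -
  have inj_g: "inj_on g (r ` P)" and inj_r: "inj_on r P"
    using assms(2) by (rule inj_on_imageI, rule inj_on_imageI2)
  have "card (g ` r ` P) = card B"
    using inj_g inj_r assms(4) by (simp add: card_image)
  moreover have "g ` r ` P \<subseteq> B"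
    using assms(3) by (simp add: image_comp)
  ultimately have "g ` r ` P = B"
    using assms(1) by (intro card_subset_eq) auto
  with inj_g show ?thesis by (simp add: bij_betw_def)
qed

locale extended_rs_aoa =
  fixes e :: "nat \<Rightarrow> 'a::{finite,field}" and h :: "'a poly" and s t :: nat
  assumes enum: "bij_betw e {0..<CARD('a)} UNIV"
    and no_roots: "\<And>x. poly h x \<noteq> 0"
    and degree_h: "degree h = t - s"
    and s_pos: "1 \<le> s" and s_le_t: "s \<le> t" and t_le_card: "t \<le> CARD('a)"
begin

definition row :: "'a poly \<Rightarrow> nat \<Rightarrow> 'a" where
  "row f i =
     (if i < CARD('a) then poly f (e i)
      else if i = CARD('a) then coeff f (t - 1)
      else if i < CARD('a) + 1 + (t - s) then coeff (f mod h) (i - (CARD('a) + 1))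
      else 0)"

definition code :: "(nat \<Rightarrow> 'a) set" where
  "code = row ` {f. degree f < t}"

lemma row_add: "row (f + g) i = row f i + row g i"
  by (simp add: row_def poly_mod_add_left)

lemma row_diff: "row (f - g) i = row f i - row g i"
  by (simp add: row_def poly_mod_diff_left)

lemma row_smult: "row (smult c f) i = c * row f i"
  by (simp add: row_def mod_smult_left)

lemma row_0: "row 0 = (\<lambda>i. 0)"
  by (auto simp: row_def)

lemma card_vanishing_positions_less:
  assumes "f \<noteq> 0" and "degree f < n" and S: "S \<subseteq> {0..<CARD('a) + 1}"
    and roots: "\<And>i. i \<in> S \<Longrightarrow> i < CARD('a) \<Longrightarrow> poly f (e i) = 0"
    and infinity: "CARD('a) \<in> S \<Longrightarrow> degree f + 1 < n"
  shows "card S < n"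
proof -
  let ?S_fin = "S \<inter> {0..<CARD('a)}"
  have "inj_on e ?S_fin"
    using enum by (auto simp: bij_betw_def intro: inj_on_subset)
  then have "card ?S_fin = card (e ` ?S_fin)"
    by (simp add: card_image)
  also have "\<dots> \<le> degree f"
    using assms(1) by (rule card_le_degree_if_roots) (auto intro: roots)
  finally have fin_bound: "card ?S_fin \<le> degree f" .
  show ?thesis
  proof (cases "CARD('a) \<in> S")
    case True
    then have "S = insert (CARD('a)) ?S_fin"
      using S by auto
    then have "card S = card ?S_fin + 1"
      by (metis Int_iff atLeastLessThan_iff card_insert_disjoint finite_Int
          finite_atLeastLessThan less_irrefl Suc_eq_plus1)
    then show ?thesis using fin_bound infinity True by simp
  next
    case False
    then have "S = ?S_fin"
      using S by (auto simp: less_Suc_eq)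
    then show ?thesis using fin_bound assms(2) by simp
  qed
qed

lemma degree_less_if_row_infinity_zero:
  assumes "f \<noteq> 0" and "degree f < t" and "row f CARD('a) = 0"
  shows "degree f + 1 < t"
proof -
  have "degree f \<noteq> t - 1"
    using assms by (metis leading_coeff_0_iff row_def less_irrefl)
  then show ?thesis using assms(2) by simp
qed

lemma eq_0_if_row_zero_on_card_t:
  assumes "degree f < t" and "S \<subseteq> {0..<CARD('a) + 1}" and "card S = t"
    and zero: "\<forall>i\<in>S. row f i = 0"
  shows "f = 0"
proof (rule ccontr)
  assume "f \<noteq> 0"
  have "card S < t"
  proof (rule card_vanishing_positions_less[OF \<open>f \<noteq> 0\<close> assms(1,2)])
    show "poly f (e i) = 0" if "i \<in> S" "i < CARD('a)" for i
      using zero that by (auto simp: row_def)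
    show "degree f + 1 < t" if "CARD('a) \<in> S"
      using degree_less_if_row_infinity_zero \<open>f \<noteq> 0\<close> assms(1) zero that by blast
  qed
  with assms(3) show False by simp
qed

lemma dvd_if_row_zero_on_last_col:
  assumes "\<forall>i\<in>last_col s t (CARD('a) + 1). row f i = 0"
  shows "h dvd f"
proof -
  have h_nz: "h \<noteq> 0"
    using no_roots by auto
  have coeff_zero: "coeff (f mod h) j = 0" if "j < degree h" for j
  proof -
    have "CARD('a) + 1 + j \<in> last_col s t (CARD('a) + 1)"
      using that degree_h by (simp add: last_col_def)
    then have "row f (CARD('a) + 1 + j) = 0"
      using assms by blast
    then show ?thesis
      using that degree_h s_le_t by (auto simp: row_def split: if_splits)
  qed
  have "f mod h = 0"
  proof (rule poly_eqI)
    fix j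
    show "coeff (f mod h) j = coeff 0 j"
    proof (cases "j < degree h")
      case False
      then show ?thesis
        using degree_mod_less[OF h_nz, of f] by (auto intro: coeff_eq_0)
    qed (simp add: coeff_zero)
  qed
  then show ?thesis by (rule mod_0_imp_dvd)
qed

lemma eq_0_if_row_zero_on_card_s_and_last_col:
  assumes "degree f < t" and S: "S \<subseteq> {0..<CARD('a) + 1}" "card S = s"
    and zero: "\<forall>i\<in>S \<union> last_col s t (CARD('a) + 1). row f i = 0"
  shows "f = 0"
proof (rule ccontr)
  assume "f \<noteq> 0"
  obtain g where f_eq: "f = h * g"
    using dvd_if_row_zero_on_last_col zero by blast
  then have "g \<noteq> 0" and degree_f: "degree f = (t - s) + degree g"
    using \<open>f \<noteq> 0\<close> degree_h by (auto simp: degree_mult_eq)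
  have "card S < s"
  proof (rule card_vanishing_positions_less[OF \<open>g \<noteq> 0\<close> _ S(1)])
    show "degree g < s"
      using assms(1) degree_f s_le_t by simp
    show "poly g (e i) = 0" if "i \<in> S" "i < CARD('a)" for i
    proof -
      have "row f i = 0"
        using zero that by blast
      then have "poly f (e i) = 0"
        using that by (simp add: row_def)
      then show ?thesis
        using no_roots by (simp add: f_eq)
    qed
    show "degree g + 1 < s" if "CARD('a) \<in> S"
      using degree_less_if_row_infinity_zero[OF \<open>f \<noteq> 0\<close> assms(1)] zero that degree_f s_le_t
      by auto
  qed
  with S(2) show False by simp
qed

lemma bij_betw_restrict_code:
  assumes "finite I" and "card I = t"
    and zero_imp_eq_0: "\<And>f. degree f < t \<Longrightarrow> \<forall>i\<in>I. row f i = 0 \<Longrightarrow> f = 0"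
  shows "bij_betw (\<lambda>x. restrict x I) code (I \<rightarrow>\<^sub>E UNIV)"
  unfolding code_def
proof (rule bij_betw_image_if_inj_on_card)
  show "inj_on ((\<lambda>x. restrict x I) \<circ> row) {f. degree f < t}"
  proof (rule inj_onI)
    fix f g assume "f \<in> {f. degree f < t}" "g \<in> {f. degree f < t}"
      and eq: "((\<lambda>x. restrict x I) \<circ> row) f = ((\<lambda>x. restrict x I) \<circ> row) g"
    have "row f i = row g i" if "i \<in> I" for i
      using fun_cong[OF eq, of i] that by simp
    then have "degree (f - g) < t" and "\<forall>i\<in>I. row (f - g) i = 0"
      using \<open>f \<in> _\<close> \<open>g \<in> _\<close> degree_diff_le_max[of f g] by (auto simp: row_diff)
    from zero_imp_eq_0[OF this] show "f = g" by simp
  qed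
  show "card {f :: 'a poly. degree f < t} = card (I \<rightarrow>\<^sub>E (UNIV :: 'a set))"
    using assms s_pos s_le_t by (simp add: card_degree_less card_PiE)
qed (use assms(1) in \<open>auto simp: finite_PiE\<close>)

lemma linear_AOA_code: "linear_AOA s t (CARD('a) + 1) code"
  unfolding linear_AOA_def
proof (intro conjI allI impI ballI)
  show "1 \<le> s" "s \<le> t" "t \<le> CARD('a) + 1"
    using s_pos s_le_t t_le_card by auto
  show "code \<subseteq> {x. \<forall>i\<ge>CARD('a) + 1 + (t - s). x i = 0}"
    by (auto simp: code_def row_def)
  show "(\<lambda>i. 0) \<in> code"
    unfolding code_def by (rule image_eqI[of _ _ 0]) (use s_pos s_le_t in \<open>auto simp: row_0\<close>)
  show "(\<lambda>i. x i + y i) \<in> code" if xy: "x \<in> code" "y \<in> code" for x y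
  proof -
    obtain f g where "x = row f" "y = row g" "degree f < t" "degree g < t"
      using xy unfolding code_def by blast
    moreover have "degree (f + g) < t"
      using calculation degree_add_le_max[of f g] by linarith
    ultimately show ?thesis
      unfolding code_def by (auto intro!: image_eqI simp: row_add[symmetric])
  qed
  show "(\<lambda>i. c * x i) \<in> code" if "x \<in> code" for c x
    using that unfolding code_def by (auto intro!: image_eqI simp: row_smult[symmetric])
next
  fix S :: "nat set" assume "S \<subseteq> {0..<CARD('a) + 1} \<and> card S = t"
  then show "bij_betw (\<lambda>x. restrict x S) code (S \<rightarrow>\<^sub>E UNIV)"
    using eq_0_if_row_zero_on_card_t
    by (intro bij_betw_restrict_code) (auto intro: finite_subset)
next
  fix S :: "nat set" assume S: "S \<subseteq> {0..<CARD('a) + 1} \<and> card S = s"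
  let ?I = "S \<union> last_col s t (CARD('a) + 1)"
  have "card ?I = t"
    using S s_le_t by (subst card_Un_disjoint) (auto simp: last_col_def intro: finite_subset)
  then show "bij_betw (\<lambda>x. restrict x ?I) code (?I \<rightarrow>\<^sub>E UNIV)"
    using eq_0_if_row_zero_on_card_s_and_last_col S
    by (intro bij_betw_restrict_code) (auto simp: last_col_def intro: finite_subset)
next
  have "bij_betw (\<lambda>x. restrict x {0..<t}) code ({0..<t} \<rightarrow>\<^sub>E UNIV)"
    using eq_0_if_row_zero_on_card_t[of _ "{0..<t}"] t_le_card
    by (intro bij_betw_restrict_code) auto
  then show "card code = CARD('a) ^ t"
    by (simp add: bij_betw_same_card card_PiE)
qed

end

theorem theorem3p7:
  fixes s t :: nat
  assumes "card (UNIV :: 'a::{finite,field} set) \<ge> 3"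
    and "1 \<le> s" and "s < t" and "t \<le> card (UNIV :: 'a set)" and "t - s \<ge> 2"
  shows "\<exists>C :: (nat \<Rightarrow> 'a) set. linear_AOA s t (card (UNIV :: 'a set) + 1) C"
proof -
  obtain e where "bij_betw e {0..<CARD('a)} (UNIV :: 'a set)"
    using ex_bij_betw_nat_finite[of "UNIV :: 'a set"] by auto
  moreover obtain h :: "'a poly" where "degree h = t - s" and "\<And>x. poly h x \<noteq> 0"
    using ex_poly_without_roots[of "t - s"] assms(5) by blast
  ultimately interpret extended_rs_aoa e h s t
    using assms by unfold_locales auto
  show ?thesis
    using linear_AOA_code by blast
qed

end
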